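(* Let $b>0$, $B=B(0,b)\subset\mathbb R^3$ the open ball of radius $b$ centred at $0$, and $M=\mathbb R^3\setminus B$. For $u\in C^1_c(M)$ and $\alpha\ge1$ define on $B$, in spherical coordinates, $u_\alpha(r,\theta,\phi)=u(r^{-\alpha}b^{\alpha+1},\theta,\phi)$. Then $$\|\nabla u_\alpha\|^2_{L^2(B)}\le\alpha\,\|\nabla u\|^2_{L^2(M)}.$$
   Context: Norms and gradients are those of the Euclidean metric on $\mathbb R^3$. *)

theory Defs
  imports "HOL-Analysis.Analysis"
begin

definition grad :: "(real^3 \<Rightarrow> real) \<Rightarrow> real^3 \<Rightarrow> real^3" where
  "grad f x = (THE D. GDERIV f x :> D)"

text \<open>The transformed function u_alpha on B: in spherical coordinates
  u_alpha(r,theta,phi) = u(r^(-alpha) b^(alpha+1), theta, phi), i.e. the point x with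
  |x| = r is sent to the point with radius r^(-alpha) b^(alpha+1) in the same direction,
  namely (b/|x|)^(alpha+1) x.  (At x = 0 the value is irrelevant, a null set.)\<close>
definition u_alpha :: "real \<Rightarrow> real \<Rightarrow> (real^3 \<Rightarrow> real) \<Rightarrow> real^3 \<Rightarrow> real" where
  "u_alpha b \<alpha> u x = u ((b / norm x) powr (\<alpha> + 1) *\<^sub>R x)"

end

theory Submission
  imports Defs
begin

text \<open>The map \<open>T x = (b / |x|) powr (\<alpha> + 1) x\<close> sends \<open>B - {0}\<close> injectively into \<open>M\<close>, and
  \<open>u_alpha = u \<circ> T\<close>. With \<open>c = (b / |x|) powr (\<alpha> + 1) \<ge> 1\<close>, its derivative is
  \<open>c (I - (\<alpha> + 1) x x\<^sup>T / |x|\<^sup>2)\<close>, a symmetric map with eigenvalues \<open>c, c, -\<alpha> c\<close>. Hence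
  \<open>|\<nabla>u_alpha x|\<^sup>2 \<le> \<alpha>\<^sup>2 c\<^sup>2 |\<nabla>u (T x)|\<^sup>2 \<le> \<alpha> |det DT x| |\<nabla>u (T x)|\<^sup>2\<close>, since
  \<open>|det DT x| = \<alpha> c\<^sup>3\<close> and \<open>c\<^sup>2 \<le> c\<^sup>3\<close>; the change of variables formula for \<open>T\<close> does the rest.\<close>

lemma grad_eqI:
  fixes f :: "real^3 \<Rightarrow> real"
  assumes "GDERIV f x :> D"
  shows "grad f x = D"
proof -
  have unique: "D' = D" if "GDERIV f x :> D'" for D'
  proof -
    have "(\<lambda>h. h \<bullet> D') = (\<lambda>h. h \<bullet> D)"
      using that assms unfolding gderiv_def by (rule has_derivative_unique)
    then have "(D' - D) \<bullet> (D' - D) = 0"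
      by (metis inner_diff_right right_minus_eq)
    then show ?thesis by simp
  qed
  show ?thesis
    unfolding grad_def using assms unique by (rule the_equality)
qed

lemma has_gderiv_grad:
  fixes f :: "real^3 \<Rightarrow> real"
  assumes "f differentiable (at x)"
  shows "GDERIV f x :> grad f x"
proof -
  obtain D where D: "(f has_derivative D) (at x)"
    using assms differentiable_def by blast
  then have lin: "linear D"
    by (rule has_derivative_linear)
  define G where "G = (\<Sum>i\<in>Basis. D i *\<^sub>R i)"
  have "D h = h \<bullet> G" for h
  proof -
    have "D h = D (\<Sum>i\<in>Basis. (h \<bullet> i) *\<^sub>R i)"
      by (simp add: euclidean_representation)
    also have "\<dots> = (\<Sum>i\<in>Basis. (h \<bullet> i) * D i)"
      by (simp add: linear_sum[OF lin] linear_scale[OF lin])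
    also have "\<dots> = h \<bullet> G"
      by (simp add: G_def inner_sum_right mult.commute)
    finally show ?thesis .
  qed
  then have "GDERIV f x :> G"
    using D unfolding gderiv_def by (metis ext)
  then show ?thesis
    using grad_eqI by metis
qed

lemma grad_eq_0_outside_closure_support:
  fixes u :: "real^3 \<Rightarrow> real"
  assumes "x \<notin> closure {y. u y \<noteq> 0}"
  shows "grad u x = 0"
proof -
  have "(u has_derivative (\<lambda>h. 0)) (at x)"
    by (rule has_derivative_transform_within_open[of "\<lambda>_. 0" _ _ _ "- closure {y. u y \<noteq> 0}"])
       (use assms closure_subset[of "{y. u y \<noteq> 0}"] in auto)
  then show ?thesis
    by (intro grad_eqI) (simp add: gderiv_def)
qed

lemma GDERIV_compose_has_derivative:
  fixes u :: "'b::real_inner \<Rightarrow> real"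
  assumes "(T has_derivative T') (at x)" and "GDERIV u (T x) :> g"
    and "\<And>h. T' h \<bullet> g = h \<bullet> D"
  shows "GDERIV (\<lambda>y. u (T y)) x :> D"
  using has_derivative_compose[OF assms(1) assms(2)[unfolded gderiv_def]] assms(3)
  unfolding gderiv_def by simp

lemma absolutely_integrable_on_UNIV_if_bounded_support:
  fixes f :: "'a::euclidean_space \<Rightarrow> 'b::euclidean_space"
  assumes "continuous_on UNIV f" and "bounded K" and "\<And>x. x \<notin> K \<Longrightarrow> f x = 0"
  shows "f absolutely_integrable_on UNIV"
proof -
  obtain a where a: "K \<subseteq> cbox (-a) a"
    using assms(2) by (rule bounded_subset_cbox_symmetric)
  have "f absolutely_integrable_on cbox (-a) a"
    by (rule absolutely_integrable_continuous) (rule continuous_on_subset[OF assms(1)], simp)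
  moreover have "(\<lambda>x. if x \<in> cbox (-a) a then f x else 0) = f"
    using a assms(3) by (auto simp: fun_eq_iff)
  ultimately show ?thesis
    using absolutely_integrable_restrict_UNIV[of "cbox (-a) a" f] by simp
qed

text \<open>The library states the change of variables formula for vector-valued integrands;
  a real integrand is passed through \<open>real^1\<close>.\<close>

lemma nn_integral_change_of_variables:
  fixes f :: "real^'n::{finite,wellorder} \<Rightarrow> real" and g :: "real^'n::_ \<Rightarrow> real^'n::_"
  assumes S: "S \<in> sets lebesgue"
    and der: "\<And>x. x \<in> S \<Longrightarrow> (g has_derivative g' x) (at x within S)"
    and inj: "inj_on g S"
    and f: "f absolutely_integrable_on g ` S" and nonneg: "\<And>y. 0 \<le> f y"
  shows "(\<integral>\<^sup>+ x \<in> S. ennreal (\<bar>det (matrix (g' x))\<bar> * f (g x)) \<partial>lborel)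
       = (\<integral>\<^sup>+ y \<in> g ` S. ennreal (f y) \<partial>lborel)"
proof -
  define I where "I = integral (g ` S) f"
  define F where "F = (\<lambda>y. vec (f y) :: real^1)"
  have fI: "(f has_integral I) (g ` S)"
    using f unfolding I_def absolutely_integrable_on_def by (simp add: integrable_integral)
  have vec: "bounded_linear (vec :: real \<Rightarrow> real^1)"
    by (simp add: linear_conv_bounded_linear[symmetric])
  have "F absolutely_integrable_on g ` S"
    using absolutely_integrable_linear[OF f vec] by (simp add: F_def o_def)
  moreover have "integral (g ` S) F = vec I"
    using has_integral_linear[OF fI vec] unfolding F_def o_def by (rule integral_unique)
  ultimately have "(\<lambda>x. \<bar>det (matrix (g' x))\<bar> *\<^sub>R F (g x)) absolutely_integrable_on S"
      and int: "integral S (\<lambda>x. \<bar>det (matrix (g' x))\<bar> *\<^sub>R F (g x)) = vec I"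
    using has_absolute_integral_change_of_variables[OF S der inj, of F "vec I"] by blast+
  then have "((\<lambda>x. \<bar>det (matrix (g' x))\<bar> *\<^sub>R F (g x)) has_integral vec I) S"
    unfolding absolutely_integrable_on_def by (metis integrable_integral)
  from has_integral_linear[OF this bounded_linear_vec_nth[of 1]]
  have "((\<lambda>x. \<bar>det (matrix (g' x))\<bar> * f (g x)) has_integral I) S"
    by (simp add: F_def o_def)
  then have "(\<integral>\<^sup>+ x \<in> S. ennreal (\<bar>det (matrix (g' x))\<bar> * f (g x)) \<partial>lborel) = ennreal I"
    by (rule nn_integral_has_integral_lebesgue'[rotated]) (simp add: nonneg)
  also have "\<dots> = (\<integral>\<^sup>+ y \<in> g ` S. ennreal (f y) \<partial>lborel)"
    using nn_integral_has_integral_lebesgue'[OF nonneg fI] by simp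
  finally show ?thesis .
qed

definition radial_scaling :: "real \<Rightarrow> real \<Rightarrow> 'a::real_normed_vector \<Rightarrow> 'a" where
  "radial_scaling b \<beta> x = (b / norm x) powr \<beta> *\<^sub>R x"

definition radial_scaling_deriv :: "real \<Rightarrow> real \<Rightarrow> 'a::real_inner \<Rightarrow> 'a \<Rightarrow> 'a" where
  "radial_scaling_deriv b \<beta> x h =
     (b / norm x) powr \<beta> *\<^sub>R h - (\<beta> * (b / norm x) powr \<beta> / (norm x)\<^sup>2 * (x \<bullet> h)) *\<^sub>R x"

lemma u_alpha_eq_comp_radial_scaling: "u_alpha b \<alpha> u = (\<lambda>x. u (radial_scaling b (\<alpha> + 1) x))"
  by (simp add: u_alpha_def radial_scaling_def fun_eq_iff)

lemma has_derivative_radial_scaling: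
  fixes x :: "'a::real_inner"
  assumes "x \<noteq> 0" and "b > 0"
  shows "(radial_scaling b \<beta> has_derivative radial_scaling_deriv b \<beta> x) (at x)"
proof -
  have "((\<lambda>y. (b / norm y) powr \<beta>) has_derivative
          (\<lambda>h. - (\<beta> * (b / norm x) powr \<beta> / (norm x)\<^sup>2 * (x \<bullet> h)))) (at x)"
    apply (rule has_derivative_eq_rhs)
     apply (rule derivative_eq_intros has_derivative_norm[OF assms(1)] refl | simp add: assms)+
    apply (simp add: fun_eq_iff sgn_div_norm inner_commute field_simps power2_eq_square assms)
    done
  from has_derivative_scaleR[OF this has_derivative_ident] show ?thesis
    unfolding radial_scaling_def radial_scaling_deriv_def[abs_def] by (simp add: algebra_simps)
qed

lemma radial_scaling_deriv_self_adjoint: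
  "radial_scaling_deriv b \<beta> x h \<bullet> g = h \<bullet> radial_scaling_deriv b \<beta> x g"
  by (simp add: radial_scaling_deriv_def inner_diff_left inner_diff_right inner_commute)

lemma norm_radial_scaling_deriv_le:
  fixes x g :: "'a::real_inner"
  assumes "x \<noteq> 0" and "1 \<le> \<alpha>"
  shows "(norm (radial_scaling_deriv b (\<alpha> + 1) x g))\<^sup>2
         \<le> \<alpha>\<^sup>2 * ((b / norm x) powr (\<alpha> + 1))\<^sup>2 * (norm g)\<^sup>2"
proof -
  define c where "c = (b / norm x) powr (\<alpha> + 1)"
  define n where "n = norm x"
  define p where "p = x \<bullet> g"
  have n: "n > 0"
    using assms(1) by (simp add: n_def)
  have expand: "(norm (a *\<^sub>R g - s *\<^sub>R x))\<^sup>2 = a\<^sup>2 * (norm g)\<^sup>2 - 2 * a * s * p + s\<^sup>2 * n\<^sup>2" for a s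
    unfolding p_def n_def power2_norm_eq_inner
    by (simp add: inner_diff_left inner_diff_right inner_commute algebra_simps power2_eq_square)
  have "(norm (radial_scaling_deriv b (\<alpha> + 1) x g))\<^sup>2
      = c\<^sup>2 * (norm g)\<^sup>2 - 2 * c * ((\<alpha> + 1) * c / n\<^sup>2 * p) * p + ((\<alpha> + 1) * c / n\<^sup>2 * p)\<^sup>2 * n\<^sup>2"
    unfolding radial_scaling_deriv_def expand c_def n_def p_def ..
  also have "\<dots> = c\<^sup>2 * (norm g)\<^sup>2 + (\<alpha>\<^sup>2 - 1) * c\<^sup>2 * (p\<^sup>2 / n\<^sup>2)"
    using n by (simp add: field_simps power2_eq_square)
  also have "\<dots> \<le> c\<^sup>2 * (norm g)\<^sup>2 + (\<alpha>\<^sup>2 - 1) * c\<^sup>2 * (norm g)\<^sup>2"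
  proof -
    have "\<bar>p\<bar> \<le> n * norm g"
      unfolding p_def n_def by (rule Cauchy_Schwarz_ineq2)
    then have "p\<^sup>2 \<le> (n * norm g)\<^sup>2"
      by (metis abs_ge_zero power2_abs power_mono)
    then have "p\<^sup>2 / n\<^sup>2 \<le> (norm g)\<^sup>2"
      using n by (simp add: divide_le_eq power_mult_distrib mult.commute)
    moreover have "0 \<le> (\<alpha>\<^sup>2 - 1) * c\<^sup>2"
      using assms(2) by (simp add: one_le_power)
    ultimately show ?thesis
      by (metis add_left_mono mult_left_mono)
  qed
  also have "\<dots> = \<alpha>\<^sup>2 * c\<^sup>2 * (norm g)\<^sup>2"
    by (simp add: algebra_simps)
  finally show ?thesis
    by (simp add: c_def)
qed

lemma det_scaleR_minus_rank_one_3: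
  fixes x :: "real^3"
  shows "det (matrix (\<lambda>h. c *\<^sub>R h - (k * (x \<bullet> h)) *\<^sub>R x)) = c ^ 3 - c\<^sup>2 * k * (norm x)\<^sup>2"
proof -
  have "(norm x)\<^sup>2 = x$1 * x$1 + x$2 * x$2 + x$3 * x$3"
    by (simp add: power2_norm_eq_inner inner_vec_def sum_3)
  then show ?thesis
    by (simp add: det_3 matrix_def axis_def inner_vec_def sum_3 algebra_simps power2_eq_square
        power3_eq_cube)
qed

lemma abs_det_radial_scaling_deriv:
  fixes x :: "real^3"
  assumes "x \<noteq> 0" and "b > 0"
  shows "\<bar>det (matrix (radial_scaling_deriv b (\<alpha> + 1) x))\<bar> = \<bar>\<alpha>\<bar> * ((b / norm x) powr (\<alpha> + 1)) ^ 3"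
proof -
  define c where "c = (b / norm x) powr (\<alpha> + 1)"
  have "det (matrix (radial_scaling_deriv b (\<alpha> + 1) x))
      = c ^ 3 - c\<^sup>2 * ((\<alpha> + 1) * c / (norm x)\<^sup>2) * (norm x)\<^sup>2"
    unfolding radial_scaling_deriv_def[abs_def] c_def by (rule det_scaleR_minus_rank_one_3)
  also have "\<dots> = - \<alpha> * c ^ 3"
    using assms(1) by (simp add: field_simps power2_eq_square power3_eq_cube)
  finally show ?thesis
    using assms by (simp add: c_def abs_mult)
qed

lemma norm_radial_scaling:
  assumes "x \<noteq> 0" and "b > 0"
  shows "norm (radial_scaling b (\<alpha> + 1) x) = b * (b / norm x) powr \<alpha>"
  using assms by (simp add: radial_scaling_def powr_add)

lemma radial_scaling_notin_ball:
  assumes "x \<in> ball 0 b" and "x \<noteq> 0" and "0 \<le> \<alpha>"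
  shows "radial_scaling b (\<alpha> + 1) x \<notin> ball 0 b"
proof -
  have x: "0 < norm x" "norm x < b"
    using assms(1,2) by auto
  then have b: "b > 0"
    by linarith
  have "1 \<le> b / norm x"
    using x by simp
  then have "1 \<le> (b / norm x) powr \<alpha>"
    using assms(3) by (rule ge_one_powr_ge_zero)
  then show ?thesis
    using norm_radial_scaling[OF assms(2) b] b by simp
qed

lemma inj_on_radial_scaling:
  assumes "\<alpha> \<noteq> 0" and "b > 0"
  shows "inj_on (radial_scaling b (\<alpha> + 1)) (- {0})"
proof (rule inj_onI)
  fix x y assume "x \<in> - {0}" "y \<in> - {0}" and eq: "radial_scaling b (\<alpha> + 1) x = radial_scaling b (\<alpha> + 1) y"
  then have x: "x \<noteq> 0" and y: "y \<noteq> 0"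
    by auto
  have "(b / norm x) powr \<alpha> = (b / norm y) powr \<alpha>"
    using norm_radial_scaling[OF x assms(2)] norm_radial_scaling[OF y assms(2)] eq assms(2)
    by (metis mult_cancel_left less_irrefl)
  then have "((b / norm x) powr \<alpha>) powr (1 / \<alpha>) = ((b / norm y) powr \<alpha>) powr (1 / \<alpha>)"
    by simp
  then have "b / norm x = b / norm y"
    using assms x y by (simp add: powr_powr)
  then show "x = y"
    using eq x y assms(2) by (simp add: radial_scaling_def)
qed

lemma nn_integral_radial_scaling_le:
  fixes f :: "real^'n::{finite,wellorder} \<Rightarrow> real"
  assumes "b > 0" and "0 < \<alpha>" and "f absolutely_integrable_on UNIV" and "\<And>y. 0 \<le> f y"
  shows "(\<integral>\<^sup>+ x \<in> ball 0 b - {0}. ennreal (\<bar>det (matrix (radial_scaling_deriv b (\<alpha> + 1) x))\<bar>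
                                          * f (radial_scaling b (\<alpha> + 1) x)) \<partial>lborel)
         \<le> (\<integral>\<^sup>+ y \<in> - ball 0 b. ennreal (f y) \<partial>lborel)"
proof -
  define S :: "(real^'n::{finite,wellorder}) set" where "S = ball 0 b - {0}"
  define T :: "real^'n::{finite,wellorder} \<Rightarrow> real^'n::{finite,wellorder}"
    where "T = radial_scaling b (\<alpha> + 1)"
  have S: "S \<in> sets lebesgue"
    unfolding S_def by (intro sets.Diff) auto
  have der: "(T has_derivative radial_scaling_deriv b (\<alpha> + 1) x) (at x within S)" if "x \<in> S" for x
    using that has_derivative_radial_scaling[OF _ assms(1)]
    by (auto simp: S_def T_def intro: has_derivative_at_withinI)
  have inj: "inj_on T S"
    unfolding T_def
    by (rule inj_on_subset[OF inj_on_radial_scaling]) (use assms(1,2) in \<open>auto simp: S_def\<close>)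
  have "T ` S \<in> sets lebesgue"
    using der by (intro differentiable_image_in_sets_lebesgue[OF S])
      (auto simp: differentiable_on_def differentiable_def)
  with assms(3) have f: "f absolutely_integrable_on T ` S"
    by (rule set_integrable_subset) simp
  have "T ` S \<subseteq> - ball 0 b"
    unfolding S_def T_def using radial_scaling_notin_ball[OF _ _ less_imp_le[OF assms(2)]] by blast
  have "(\<integral>\<^sup>+ x \<in> S. ennreal (\<bar>det (matrix (radial_scaling_deriv b (\<alpha> + 1) x))\<bar> * f (T x)) \<partial>lborel)
      = (\<integral>\<^sup>+ y \<in> T ` S. ennreal (f y) \<partial>lborel)"
    by (rule nn_integral_change_of_variables[OF S der inj f assms(4)])
  also have "\<dots> \<le> (\<integral>\<^sup>+ y \<in> - ball 0 b. ennreal (f y) \<partial>lborel)"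
    using \<open>T ` S \<subseteq> - ball 0 b\<close> by (intro nn_integral_mono) (auto simp: indicator_def)
  finally show ?thesis
    unfolding S_def T_def .
qed

lemma norm_grad_u_alpha_le:
  fixes u :: "real^3 \<Rightarrow> real"
  assumes "b > 0" and "1 \<le> \<alpha>" and "x \<in> ball 0 b" and "x \<noteq> 0"
    and "u differentiable (at (radial_scaling b (\<alpha> + 1) x))"
  shows "(norm (grad (u_alpha b \<alpha> u) x))\<^sup>2
    \<le> \<alpha> * (\<bar>det (matrix (radial_scaling_deriv b (\<alpha> + 1) x))\<bar>
             * (norm (grad u (radial_scaling b (\<alpha> + 1) x)))\<^sup>2)"
proof -
  define c where "c = (b / norm x) powr (\<alpha> + 1)"
  define g where "g = grad u (radial_scaling b (\<alpha> + 1) x)"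
  have "1 \<le> b / norm x"
    using assms(3,4) by simp
  then have c: "1 \<le> c"
    using assms(2) by (simp add: c_def ge_one_powr_ge_zero)
  have "GDERIV (u_alpha b \<alpha> u) x :> radial_scaling_deriv b (\<alpha> + 1) x g"
    unfolding u_alpha_eq_comp_radial_scaling
    by (rule GDERIV_compose_has_derivative[OF has_derivative_radial_scaling[OF assms(4,1)]])
       (simp_all add: g_def has_gderiv_grad assms(5) radial_scaling_deriv_self_adjoint)
  then have "(norm (grad (u_alpha b \<alpha> u) x))\<^sup>2 \<le> \<alpha>\<^sup>2 * c\<^sup>2 * (norm g)\<^sup>2"
    using norm_radial_scaling_deriv_le[OF assms(4,2)] by (simp add: grad_eqI c_def)
  also have "\<dots> \<le> \<alpha>\<^sup>2 * c ^ 3 * (norm g)\<^sup>2"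
    using c by (intro mult_right_mono mult_left_mono) (simp_all add: power2_eq_square power3_eq_cube)
  also have "\<dots> = \<alpha> * (\<bar>det (matrix (radial_scaling_deriv b (\<alpha> + 1) x))\<bar> * (norm g)\<^sup>2)"
    using assms by (simp add: abs_det_radial_scaling_deriv c_def power2_eq_square)
  finally show ?thesis
    by (simp add: g_def)
qed

theorem lemma5p1:
  fixes b \<alpha> :: real and u :: "real^3 \<Rightarrow> real"
  assumes "b > 0" and "\<alpha> \<ge> 1"
    and "\<forall>x. u differentiable (at x)"
    and "continuous_on UNIV (grad u)"
    and "compact (closure {x. u x \<noteq> 0})"
  shows "(\<integral>\<^sup>+ x \<in> ball 0 b. ennreal ((norm (grad (u_alpha b \<alpha> u) x))\<^sup>2) \<partial>lborel)
         \<le> ennreal \<alpha> * (\<integral>\<^sup>+ x \<in> - ball 0 b. ennreal ((norm (grad u x))\<^sup>2) \<partial>lborel)"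
proof -
  define f where "f y = \<alpha> * (norm (grad u y))\<^sup>2" for y
  have f_nonneg: "0 \<le> f y" for y
    using assms(2) by (simp add: f_def)
  have [measurable]: "(\<lambda>x. (norm (grad u x))\<^sup>2) \<in> borel_measurable borel"
    using assms(4) by (intro borel_measurable_continuous_onI continuous_intros)
  have f_int: "f absolutely_integrable_on UNIV"
    using assms(4,5)
    by (intro absolutely_integrable_on_UNIV_if_bounded_support[of _ "closure {x. u x \<noteq> 0}"])
       (auto simp: f_def grad_eq_0_outside_closure_support compact_imp_bounded intro!: continuous_intros)
  have "(\<integral>\<^sup>+ x \<in> ball 0 b. ennreal ((norm (grad (u_alpha b \<alpha> u) x))\<^sup>2) \<partial>lborel)
      = (\<integral>\<^sup>+ x \<in> ball 0 b - {0}. ennreal ((norm (grad (u_alpha b \<alpha> u) x))\<^sup>2) \<partial>lborel)"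
    by (intro nn_integral_cong_AE eventually_mono[OF AE_lborel_singleton[of 0]])
      (auto simp: indicator_def)
  also have "\<dots> \<le> (\<integral>\<^sup>+ x \<in> ball 0 b - {0}. ennreal (\<bar>det (matrix (radial_scaling_deriv b (\<alpha> + 1) x))\<bar>
                                          * f (radial_scaling b (\<alpha> + 1) x)) \<partial>lborel)"
    using norm_grad_u_alpha_le[OF assms(1,2)] assms(3)
    by (intro nn_integral_mono) (auto simp: f_def indicator_def mult.left_commute intro!: ennreal_leI)
  also have "\<dots> \<le> (\<integral>\<^sup>+ y \<in> - ball 0 b. ennreal (f y) \<partial>lborel)"
    by (rule nn_integral_radial_scaling_le[OF assms(1) _ f_int f_nonneg]) (use assms(2) in simp)
  also have "\<dots> = ennreal \<alpha> * (\<integral>\<^sup>+ x \<in> - ball 0 b. ennreal ((norm (grad u x))\<^sup>2) \<partial>lborel)"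
    using assms(2) by (subst nn_integral_cmult[symmetric]) (auto simp: f_def ennreal_mult' mult.assoc)
  finally show ?thesis .
qed

end
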